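(* Let $P$ be a finite poset and $R$ a consistent restriction function on $P$ such that each $R(p)$ is a nonempty interval of integers. Then on the set $\{(p,k):p\in P,\ k\in R(p)^*\}$, the defining relation $\lessdot$ of $\Gamma(P,R)$ holds between $(p_1,k_1)$ and $(p_2,k_2)$ if and only if either (1) $p_1=p_2$ and $k_1=k_2+1$, or (2) $p_1\lessdot p_2$ in $P$ and $k_1+1=k_2$. In particular, $\Gamma(P,R)$ is the poset on this set whose covering relations are exactly those given by (1) and (2).
   Context: A restriction function assigns to each $p\in P$ a nonempty finite $R(p)\subseteq\mathbb{Z}$; $R$ is consistent if for every cover $x\lessdot y$ in $P$, $\min R(x)<\min R(y)$ and $\max R(x)<\max R(y)$. $R(p)^*=R(p)\setminus\{\max R(p)\}$; $R(p)_{>k}$ (resp. $R(p)_{<k}$) is the smallest (resp. largest) element of $R(p)$ greater (resp. less) than $k$. $\Gamma(P,R)$ is the poset on $\{(p,k):p\in P,k\in R(p)^*\}$ whose order is the reflexive–transitive closure of the relation $(p_1,k_1)\lessdot(p_2,k_2)$ (its covering relations), which holds iff either (i) $p_1=p_2$ and $R(p_1)_{>k_2}=k_1$; or (ii) $p_1\lessdot p_2$ in $P$, $k_1=R(p_1)_{<k_2}$, $k_1\ne\max R(p_1)$, and there is no $k\in R(p_2)$ with $k>k_2$ and $R(p_1)_{<k}=k_1$. *)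

theory Defs
  imports Main
begin

text \<open>A finite poset is modelled as a finite carrier set P inside a type with a partial order;
  the order on P is the induced one.\<close>

definition covers_in :: "'a::order set \<Rightarrow> 'a \<Rightarrow> 'a \<Rightarrow> bool" where
  "covers_in P x y \<longleftrightarrow> x \<in> P \<and> y \<in> P \<and> x < y \<and> \<not> (\<exists>z\<in>P. x < z \<and> z < y)"

definition restriction_fun :: "'a set \<Rightarrow> ('a \<Rightarrow> int set) \<Rightarrow> bool" where
  "restriction_fun P R \<longleftrightarrow> (\<forall>p\<in>P. finite (R p) \<and> R p \<noteq> {})"

definition consistent :: "'a::order set \<Rightarrow> ('a \<Rightarrow> int set) \<Rightarrow> bool" where
  "consistent P R \<longleftrightarrow> (\<forall>x y. covers_in P x y \<longrightarrow>
      Min (R x) < Min (R y) \<and> Max (R x) < Max (R y))"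

definition Rstar :: "int set \<Rightarrow> int set" where
  "Rstar S = S - {Max S}"

definition above :: "int set \<Rightarrow> int \<Rightarrow> int option" where
  "above S k = (if \<exists>x\<in>S. x > k then Some (Min {x\<in>S. x > k}) else None)"

definition below :: "int set \<Rightarrow> int \<Rightarrow> int option" where
  "below S k = (if \<exists>x\<in>S. x < k then Some (Max {x\<in>S. x < k}) else None)"

definition Gamma_set :: "'a set \<Rightarrow> ('a \<Rightarrow> int set) \<Rightarrow> ('a \<times> int) set" where
  "Gamma_set P R = {(p, k). p \<in> P \<and> k \<in> Rstar (R p)}"

definition Gamma_cov :: "'a::order set \<Rightarrow> ('a \<Rightarrow> int set) \<Rightarrow> 'a \<times> int \<Rightarrow> 'a \<times> int \<Rightarrow> bool" where
  "Gamma_cov P R a b \<longleftrightarrow> a \<in> Gamma_set P R \<and> b \<in> Gamma_set P R \<and>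
     (let (p1, k1) = a; (p2, k2) = b in
       (p1 = p2 \<and> above (R p1) k2 = Some k1) \<or>
       (covers_in P p1 p2 \<and> below (R p1) k2 = Some k1 \<and> k1 \<noteq> Max (R p1) \<and>
        \<not> (\<exists>k\<in>R p2. k > k2 \<and> below (R p1) k = Some k1)))"

definition Gamma_le :: "'a::order set \<Rightarrow> ('a \<Rightarrow> int set) \<Rightarrow> 'a \<times> int \<Rightarrow> 'a \<times> int \<Rightarrow> bool" where
  "Gamma_le P R = (Gamma_cov P R)\<^sup>*\<^sup>*"

end

theory Submission
  imports Defs
begin

text \<open>When every R p is an interval {a..b}, the successor above k in R p is just k + 1 and
  the predecessor below k is k - 1 (clipped at the endpoints), so both clauses of the
  definition of Gamma_cov collapse. In the same-point clause this gives k1 = k2 + 1 at once.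
  In the cover clause the predecessor of k2 in R p1 is k2 - 1, because consistency puts
  min R p1 strictly below min R p2 \<le> k2; and the final "no larger k" condition is then
  automatic, since any k > k2 has predecessor min (k - 1) (max R p1) > k2 - 1.\<close>

lemma Min_atLeastAtMost: "(a::int) \<le> b \<Longrightarrow> Min {a..b} = a"
  by (intro Min_eqI) auto

lemma Max_atLeastAtMost: "(a::int) \<le> b \<Longrightarrow> Max {a..b} = b"
  by (intro Max_eqI) auto

lemma Rstar_atLeastAtMost: "Rstar {a..b} = {a..<(b::int)}"
  by (cases "a \<le> b") (auto simp: Rstar_def Max_atLeastAtMost)

lemma above_atLeastAtMost:
  assumes "a \<le> k" "k < (b::int)"
  shows "above {a..b} k = Some (k + 1)"
proof -
  have "{x \<in> {a..b}. x > k} = {k + 1..b}" using assms by auto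
  moreover have "\<exists>x\<in>{a..b}. x > k" using assms by auto
  ultimately show ?thesis using assms by (simp add: above_def Min_atLeastAtMost)
qed

lemma below_atLeastAtMost:
  assumes "a < (k::int)" "a \<le> b"
  shows "below {a..b} k = Some (min (k - 1) b)"
proof -
  have "{x \<in> {a..b}. x < k} = {a..min (k - 1) b}" by auto
  moreover have "\<exists>x\<in>{a..b}. x < k" using assms by auto
  ultimately show ?thesis using assms by (simp add: below_def Max_atLeastAtMost)
qed

lemma consistent_intervals_Min_less:
  assumes "consistent P R" "covers_in P p q"
    and "R p = {a..b}" "a \<le> b" "R q = {c..d}" "c \<le> d"
  shows "a < c"
  using assms by (force simp: consistent_def Min_atLeastAtMost)

lemma Gamma_cov_same_point_iff:
  assumes "(p, k1) \<in> Gamma_set P R" "(p, k2) \<in> Gamma_set P R" "R p = {a..b}"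
  shows "Gamma_cov P R (p, k1) (p, k2) \<longleftrightarrow> k1 = k2 + 1"
proof -
  have "a \<le> k2" "k2 < b"
    using assms(2,3) by (auto simp: Gamma_set_def Rstar_atLeastAtMost)
  then have "above (R p) k2 = Some (k2 + 1)"
    using assms(3) by (simp add: above_atLeastAtMost)
  moreover have "\<not> covers_in P p p" by (simp add: covers_in_def)
  ultimately show ?thesis using assms(1,2) by (auto simp: Gamma_cov_def)
qed

lemma Gamma_cov_cover_iff:
  assumes "(p1, k1) \<in> Gamma_set P R" "(p2, k2) \<in> Gamma_set P R" "covers_in P p1 p2"
    and "R p1 = {a1..b1}" "R p2 = {a2..b2}" "a1 < a2"
  shows "Gamma_cov P R (p1, k1) (p2, k2) \<longleftrightarrow> k1 + 1 = k2"
proof -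
  have k1: "a1 \<le> k1" "k1 < b1" and k2: "a2 \<le> k2" "k2 < b2"
    using assms(1,2,4,5) by (auto simp: Gamma_set_def Rstar_atLeastAtMost)
  have "p1 \<noteq> p2" using assms(3) by (auto simp: covers_in_def)
  have below_p1: "below (R p1) k = Some (min (k - 1) b1)" if "k \<ge> k2" for k
    using that k1 k2 assms(4,6) by (simp add: below_atLeastAtMost)
  have "Max (R p1) = b1" using k1 assms(4) by (simp add: Max_atLeastAtMost)
  then have "Gamma_cov P R (p1, k1) (p2, k2) \<longleftrightarrow>
      min (k2 - 1) b1 = k1 \<and> k1 \<noteq> b1 \<and>
      \<not> (\<exists>k\<in>R p2. k > k2 \<and> min (k - 1) b1 = k1)"
    using assms(1-3) \<open>p1 \<noteq> p2\<close> below_p1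
    by (auto simp: Gamma_cov_def intro!: bex_cong)
  also have "\<dots> \<longleftrightarrow> k1 + 1 = k2"
    using k1 by auto
  finally show ?thesis .
qed

theorem theorem2p21:
  fixes P :: "'a::order set" and R :: "'a \<Rightarrow> int set"
  assumes "finite P"
    and "restriction_fun P R"
    and "consistent P R"
    and "\<forall>p\<in>P. \<exists>a b. a \<le> b \<and> R p = {a..b}"
  shows "\<forall>p1 k1 p2 k2. (p1, k1) \<in> Gamma_set P R \<longrightarrow> (p2, k2) \<in> Gamma_set P R \<longrightarrow>
           (Gamma_cov P R (p1, k1) (p2, k2) \<longleftrightarrow>
              ((p1 = p2 \<and> k1 = k2 + 1) \<or> (covers_in P p1 p2 \<and> k1 + 1 = k2)))"
proof (intro allI impI)
  fix p1 k1 p2 k2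
  assume g1: "(p1, k1) \<in> Gamma_set P R" and g2: "(p2, k2) \<in> Gamma_set P R"
  obtain a1 b1 where r1: "a1 \<le> b1" "R p1 = {a1..b1}"
    using assms(4) g1 by (auto simp: Gamma_set_def)
  obtain a2 b2 where r2: "a2 \<le> b2" "R p2 = {a2..b2}"
    using assms(4) g2 by (auto simp: Gamma_set_def)
  consider "p1 = p2" | "covers_in P p1 p2" | "p1 \<noteq> p2" "\<not> covers_in P p1 p2" by blast
  then show "Gamma_cov P R (p1, k1) (p2, k2) \<longleftrightarrow>
      ((p1 = p2 \<and> k1 = k2 + 1) \<or> (covers_in P p1 p2 \<and> k1 + 1 = k2))"
  proof cases
    case 1
    with g1 g2 r1 have "Gamma_cov P R (p1, k1) (p2, k2) \<longleftrightarrow> k1 = k2 + 1"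
      using Gamma_cov_same_point_iff by blast
    with 1 show ?thesis by (auto simp: covers_in_def)
  next
    case 2
    then have "a1 < a2" using consistent_intervals_Min_less assms(3) r1 r2 by blast
    then show ?thesis
      using Gamma_cov_cover_iff[OF g1 g2 2 r1(2) r2(2)] 2 by (auto simp: covers_in_def)
  next
    case 3
    then show ?thesis by (simp add: Gamma_cov_def)
  qed
qed

end
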